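(* Let $(S,\Delta,\mathbb{P})$ be a probability space, $(U,d)$ a separable metric space, $\mathfrak{X}$ the set of $U$-valued random variables on $S$, $r\geq 0$, $\underline{X}=\{X_n\}_{n\in\mathbb{N}}$ a sequence in $\mathfrak{X}$, and $\mathcal{I}$ an analytic $P$-ideal on $\mathbb{N}$. Then the set $\mathcal{I}^{\mathbb{P}}\text{-}LIM^r\underline{X}$ is a Borel set of type $F_{\sigma\delta}$ in $(\mathfrak{X}^0,\rho)$.
   Context: The Ky Fan metric is $\rho(X,Y)=\inf\{\varepsilon>0:\mathbb{P}(d(X,Y)>\varepsilon)\leq\varepsilon\}$; $\mathfrak{X}^0$ is the set of equivalence classes of $\mathfrak{X}$ under almost sure equality, on which $\rho$ is a metric. A submeasure on $\mathbb{N}$ is $\varphi:\mathcal{P}(\mathbb{N})\to[0,\infty]$ with $\varphi(\varnothing)=0$, monotone, subadditive, and $\varphi(\{t\})<\infty$ for all $t$; it is lower semicontinuous if $\varphi(A)=\lim_{t\to\infty}\varphi(A\cap[1,t])$ for all $A$. An ideal $\mathcal{I}$ on $\mathbb{N}$ is an analytic $P$-ideal if $\mathcal{I}=Exh(\varphi)=\{A\subseteq\mathbb{N}:\lim_{t\to\infty}\varphi(A\setminus\{1,\dots,t\})=0\}$ for some lower semicontinuous submeasure $\varphi$. The set $\mathcal{I}^{\mathbb{P}}\text{-}LIM^r\underline{X}$ consists of all $X_*\in\mathfrak{X}$ with $\{n\in\mathbb{N}:\mathbb{P}(d(X_n,X_* )>r+\varepsilon)>\delta\}\in\mathcal{I}$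 for every $\varepsilon,\delta>0$ (regarded as a subset of $\mathfrak{X}^0$). An $F_{\sigma\delta}$ set is a countable intersection of countable unions of closed sets. *)

theory Defs
  imports "HOL-Probability.Probability"
begin

definition RV :: "'s measure \<Rightarrow> ('s \<Rightarrow> 'u::metric_space) set" where
  "RV M = {X. X \<in> borel_measurable M}"

definition ky_fan :: "'s measure \<Rightarrow> ('s \<Rightarrow> 'u::metric_space) \<Rightarrow> ('s \<Rightarrow> 'u) \<Rightarrow> real" where
  "ky_fan M X Y = Inf {e. e > 0 \<and> measure M {s \<in> space M. dist (X s) (Y s) > e} \<le> e}"

text \<open>Closed sets of the (pseudo)metric space (RV M, ky_fan M). These are exactly the
  preimages of closed sets of the quotient metric space of a.s.-equivalence classes.\<close>
definition kf_closed :: "'s measure \<Rightarrow> ('s \<Rightarrow> 'u::metric_space) set \<Rightarrow> bool" where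
  "kf_closed M F \<longleftrightarrow> F \<subseteq> RV M \<and>
     (\<forall>X\<in>RV M. (\<forall>e>0. \<exists>Y\<in>F. ky_fan M X Y < e) \<longrightarrow> X \<in> F)"

definition kf_F_sigma_delta :: "'s measure \<Rightarrow> ('s \<Rightarrow> 'u::metric_space) set \<Rightarrow> bool" where
  "kf_F_sigma_delta M A \<longleftrightarrow>
     (\<exists>F :: nat \<Rightarrow> nat \<Rightarrow> ('s \<Rightarrow> 'u) set.
        (\<forall>i j. kf_closed M (F i j)) \<and> A = (\<Inter>i. \<Union>j. F i j))"

definition submeasure :: "(nat set \<Rightarrow> ennreal) \<Rightarrow> bool" where
  "submeasure \<phi> \<longleftrightarrow> \<phi> {} = 0 \<and> (\<forall>A B. A \<subseteq> B \<longrightarrow> \<phi> A \<le> \<phi> B) \<and>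
     (\<forall>A B. \<phi> (A \<union> B) \<le> \<phi> A + \<phi> B) \<and> (\<forall>t. \<phi> {t} < \<infinity>)"

definition lsc_submeasure :: "(nat set \<Rightarrow> ennreal) \<Rightarrow> bool" where
  "lsc_submeasure \<phi> \<longleftrightarrow> submeasure \<phi> \<and>
     (\<forall>A. (\<lambda>t. \<phi> (A \<inter> {..t})) \<longlonglongrightarrow> \<phi> A)"

definition Exh :: "(nat set \<Rightarrow> ennreal) \<Rightarrow> nat set set" where
  "Exh \<phi> = {A. (\<lambda>t. \<phi> (A - {..t})) \<longlonglongrightarrow> 0}"

definition analytic_P_ideal :: "nat set set \<Rightarrow> bool" where
  "analytic_P_ideal I \<longleftrightarrow> (\<exists>\<phi>. lsc_submeasure \<phi> \<and> I = Exh \<phi>)"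

definition ideal_prob_LIM ::
    "'s measure \<Rightarrow> nat set set \<Rightarrow> real \<Rightarrow> (nat \<Rightarrow> 's \<Rightarrow> 'u::metric_space) \<Rightarrow> ('s \<Rightarrow> 'u) set" where
  "ideal_prob_LIM M I r X = {Y \<in> RV M. \<forall>\<epsilon>>0. \<forall>\<delta>>0.
     {n. measure M {s \<in> space M. dist (X n s) (Y s) > r + \<epsilon>} > \<delta>} \<in> I}"

end

theory Submission
  imports Defs
begin

text \<open>Write \<open>A\<^sub>k(Y)\<close> for the set of indices \<open>n\<close> with
  \<open>P(d(X\<^sub>n, Y) > r + 1/(k+1)) > 1/(k+1)\<close>. Since \<open>I\<close> is hereditary, \<open>Y\<close> lies in
  \<open>I\<^sup>P-LIM\<^sup>r X\<close> iff every \<open>A\<^sub>k(Y)\<close> lies in \<open>I = Exh \<phi>\<close>, i.e. iff for all \<open>k, m\<close> there is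
  a \<open>t\<close> with \<open>\<phi>(A\<^sub>k(Y) - [0,t]) \<le> 1/(m+1)\<close>. The map \<open>Y \<mapsto> P(d(X\<^sub>n, Y) > a)\<close> is lower
  semicontinuous for the Ky Fan metric, so every index of \<open>A\<^sub>k(Y)\<close> stays in \<open>A\<^sub>k(Z)\<close>
  for \<open>Z\<close> close to \<open>Y\<close>. As \<open>\<phi>\<close> is monotone and lower semicontinuous, the condition
  \<open>\<phi>(A\<^sub>k(Y) - [0,t]) \<le> c\<close> is a countable intersection of conditions on finite traces of
  \<open>A\<^sub>k(Y)\<close>, each of which is closed in \<open>Y\<close>. Hence the set is \<open>\<Inter>\<^sub>k\<^sub>,\<^sub>m \<Union>\<^sub>t\<close> of closed sets.\<close>

lemma RV_dist_gt_sets: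
  fixes X Y :: "'s \<Rightarrow> 'u::{metric_space, second_countable_topology}"
  assumes "X \<in> RV M" "Y \<in> RV M"
  shows "{s \<in> space M. a < dist (X s) (Y s)} \<in> sets M"
proof -
  have "X \<in> borel_measurable M" "Y \<in> borel_measurable M"
    using assms unfolding RV_def by auto
  then show ?thesis by measurable
qed

lemma (in prob_space) ky_fan_lessD:
  fixes Y Z :: "'a \<Rightarrow> 'u::{metric_space, second_countable_topology}"
  assumes Y: "Y \<in> RV M" and Z: "Z \<in> RV M" and less: "ky_fan M Y Z < e"
  shows "measure M {s \<in> space M. e < dist (Y s) (Z s)} \<le> e"
proof -
  let ?S = "{e. e > 0 \<and> measure M {s \<in> space M. dist (Y s) (Z s) > e} \<le> e}"
  have "1 \<in> ?S" by simp
  then have "?S \<noteq> {}" by blast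
  moreover have "Inf ?S < e" using less unfolding ky_fan_def .
  ultimately have "\<exists>x\<in>?S. x < e" by (rule cInf_lessD)
  then obtain x where x: "x \<in> ?S" "x < e" ..
  have "measure M {s \<in> space M. e < dist (Y s) (Z s)}
      \<le> measure M {s \<in> space M. x < dist (Y s) (Z s)}"
    by (rule finite_measure_mono) (use x(2) RV_dist_gt_sets[OF Y Z] in auto)
  also have "\<dots> \<le> x" using x(1) by simp
  finally show ?thesis using x(2) by simp
qed

lemma (in finite_measure) measure_gt_margin:
  fixes f :: "'a \<Rightarrow> real"
  assumes f: "f \<in> borel_measurable M" and less: "\<delta> < measure M {s \<in> space M. a < f s}"
  shows "\<exists>\<eta>>0. \<delta> < measure M {s \<in> space M. a + \<eta> < f s}"
proof -
  define B where "B k = {s \<in> space M. a + inverse (real (Suc k)) < f s}" for k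
  have "range B \<subseteq> sets M" unfolding B_def using f by auto
  moreover have "incseq B"
  proof (rule incseq_SucI)
    fix k
    have "inverse (real (Suc (Suc k))) \<le> inverse (real (Suc k))"
      by (simp add: field_simps)
    from le_less_trans[OF add_left_mono[OF this]] show "B k \<subseteq> B (Suc k)"
      unfolding B_def by blast
  qed
  moreover have "(\<Union>k. B k) = {s \<in> space M. a < f s}"
  proof (intro equalityI subsetI)
    fix s assume s: "s \<in> {s \<in> space M. a < f s}"
    then obtain k where "inverse (real (Suc k)) < f s - a"
      using reals_Archimedean[of "f s - a"] by auto
    then have "a + inverse (real (Suc k)) < f s" by linarith
    with s show "s \<in> (\<Union>k. B k)" unfolding B_def by blast
  qed (auto simp: B_def intro: less_trans[rotated])
  ultimately have "(\<lambda>k. measure M (B k)) \<longlonglongrightarrow> measure M {s \<in> space M. a < f s}"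
    using finite_Lim_measure_incseq by metis
  from order_tendstoD(1)[OF this less] obtain k where "\<delta> < measure M (B k)"
    by (auto simp: eventually_sequentially)
  then show ?thesis unfolding B_def by (intro exI[of _ "inverse (real (Suc k))"]) auto
qed

lemma (in prob_space) measure_dist_gt_ky_fan_lsc:
  fixes X0 Y :: "'a \<Rightarrow> 'u::{metric_space, second_countable_topology}"
  assumes X0: "X0 \<in> RV M" and Y: "Y \<in> RV M"
    and less: "\<delta> < measure M {s \<in> space M. a < dist (X0 s) (Y s)}"
  shows "\<exists>e>0. \<forall>Z\<in>RV M. ky_fan M Y Z < e \<longrightarrow>
           \<delta> < measure M {s \<in> space M. a < dist (X0 s) (Z s)}"
proof -
  have "(\<lambda>s. dist (X0 s) (Y s)) \<in> borel_measurable M"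
    using X0 Y unfolding RV_def by (simp add: borel_measurable_dist)
  from measure_gt_margin[OF this less] obtain \<eta> where \<eta>: "\<eta> > 0"
    and gap: "\<delta> < measure M {s \<in> space M. a + \<eta> < dist (X0 s) (Y s)}"
    by blast
  define q where "q = measure M {s \<in> space M. a + \<eta> < dist (X0 s) (Y s)}"
  define e where "e = min \<eta> ((q - \<delta>) / 2)"
  have "e \<le> \<eta>" "e \<le> (q - \<delta>) / 2" unfolding e_def by (rule min.cobounded1 min.cobounded2)+
  have "e > 0" using \<eta> gap unfolding e_def q_def by simp
  moreover have "\<delta> < measure M {s \<in> space M. a < dist (X0 s) (Z s)}"
    if Z: "Z \<in> RV M" and near: "ky_fan M Y Z < e" for Z
  proof -
    let ?far = "{s \<in> space M. a < dist (X0 s) (Z s)}"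
    let ?apart = "{s \<in> space M. e < dist (Y s) (Z s)}"
    have "{s \<in> space M. a + \<eta> < dist (X0 s) (Y s)} \<subseteq> ?far \<union> ?apart"
    proof safe
      fix s assume "a + \<eta> < dist (X0 s) (Y s)" "\<not> e < dist (Y s) (Z s)"
      moreover have "dist (X0 s) (Y s) \<le> dist (X0 s) (Z s) + dist (Y s) (Z s)"
        by (metis dist_commute dist_triangle)
      ultimately show "a < dist (X0 s) (Z s)" using \<open>e \<le> \<eta>\<close> by linarith
    qed
    then have "q \<le> measure M (?far \<union> ?apart)"
      unfolding q_def using RV_dist_gt_sets[OF X0 Z] RV_dist_gt_sets[OF Y Z]
      by (intro finite_measure_mono) auto
    also have "\<dots> \<le> measure M ?far + measure M ?apart"
      using RV_dist_gt_sets[OF X0 Z] RV_dist_gt_sets[OF Y Z] by (rule measure_Un_le)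
    also have "\<dots> \<le> measure M ?far + e"
      using ky_fan_lessD[OF Y Z near] by simp
    finally have "q \<le> measure M ?far + e" .
    moreover have "\<delta> < q" using gap unfolding q_def .
    ultimately show ?thesis using \<open>e \<le> (q - \<delta>) / 2\<close> by (simp add: field_simps)
  qed
  ultimately show ?thesis by blast
qed

definition exceed_set ::
    "'s measure \<Rightarrow> (nat \<Rightarrow> 's \<Rightarrow> 'u::metric_space) \<Rightarrow> real \<Rightarrow> real \<Rightarrow> ('s \<Rightarrow> 'u) \<Rightarrow> nat set" where
  "exceed_set M X r e Y = {n. measure M {s \<in> space M. dist (X n s) (Y s) > r + e} > e}"

definition kf_lsc :: "'s measure \<Rightarrow> (('s \<Rightarrow> 'u::metric_space) \<Rightarrow> 'i set) \<Rightarrow> bool" where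
  "kf_lsc M S \<longleftrightarrow>
     (\<forall>Y\<in>RV M. \<forall>n\<in>S Y. \<exists>e>0. \<forall>Z\<in>RV M. ky_fan M Y Z < e \<longrightarrow> n \<in> S Z)"

lemma (in prob_space) kf_lsc_exceed_set:
  fixes X :: "nat \<Rightarrow> 'a \<Rightarrow> 'u::{metric_space, second_countable_topology}"
  assumes "\<And>n. X n \<in> RV M"
  shows "kf_lsc M (exceed_set M X r e)"
  unfolding kf_lsc_def exceed_set_def
  using measure_dist_gt_ky_fan_lsc[OF assms] by auto

lemma kf_lsc_Diff: "kf_lsc M S \<Longrightarrow> kf_lsc M (\<lambda>Y. S Y - T)"
  unfolding kf_lsc_def by blast

lemma kf_closed_INT:
  assumes "\<And>i. kf_closed M (F i)"
  shows "kf_closed M (\<Inter>i. F i)"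
  unfolding kf_closed_def
proof (intro conjI ballI impI)
  show "(\<Inter>i. F i) \<subseteq> RV M" using assms[of undefined] unfolding kf_closed_def by blast
  fix X assume X: "X \<in> RV M" and adh: "\<forall>e>0. \<exists>Y\<in>(\<Inter>i. F i). ky_fan M X Y < e"
  show "X \<in> (\<Inter>i. F i)"
  proof (rule INT_I)
    fix i
    have "\<forall>e>0. \<exists>Y\<in>F i. ky_fan M X Y < e" using adh by blast
    with X assms[of i] show "X \<in> F i" unfolding kf_closed_def by blast
  qed
qed

text \<open>Finitely many indices of \<open>S Y\<close> persist on a common Ky Fan ball around \<open>Y\<close>.\<close>
lemma kf_closed_finite_trace:
  assumes lsc: "kf_lsc M S" and N: "finite N" and down: "\<And>A B. A \<subseteq> B \<Longrightarrow> P B \<Longrightarrow> P A"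
  shows "kf_closed M {Y \<in> RV M. P (S Y \<inter> N)}"
  unfolding kf_closed_def
proof (intro conjI ballI impI)
  fix Y assume Y: "Y \<in> RV M" and adh: "\<forall>e>0. \<exists>Z\<in>{Y \<in> RV M. P (S Y \<inter> N)}. ky_fan M Y Z < e"
  have "\<forall>\<^sub>F e in at_right 0. \<forall>Z\<in>RV M. ky_fan M Y Z < e \<longrightarrow> n \<in> S Z" if n: "n \<in> S Y" for n
  proof -
    obtain e where "e > 0" "\<forall>Z\<in>RV M. ky_fan M Y Z < e \<longrightarrow> n \<in> S Z"
      using lsc[unfolded kf_lsc_def, rule_format, OF Y n] by blast
    then show ?thesis unfolding eventually_at_right_field by (intro exI[of _ e]) auto
  qed
  then have "\<forall>\<^sub>F e in at_right 0. 0 < e \<and>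
      (\<forall>n\<in>S Y \<inter> N. \<forall>Z\<in>RV M. ky_fan M Y Z < e \<longrightarrow> n \<in> S Z)"
    using N by (intro eventually_conj eventually_at_right_less eventually_ball_finite) auto
  then obtain e where "0 < e" and e: "\<forall>n\<in>S Y \<inter> N. \<forall>Z\<in>RV M. ky_fan M Y Z < e \<longrightarrow> n \<in> S Z"
    using eventually_happens'[OF trivial_limit_at_right_real] by blast
  then obtain Z where Z: "Z \<in> RV M" "P (S Z \<inter> N)" "ky_fan M Y Z < e"
    using adh[rule_format, OF \<open>0 < e\<close>] by blast
  have "S Y \<inter> N \<subseteq> S Z \<inter> N" using e Z by blast
  then have "P (S Y \<inter> N)" using Z(2) by (rule down)
  with Y show "Y \<in> {Y \<in> RV M. P (S Y \<inter> N)}" by blast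
qed auto

lemma submeasure_mono: "submeasure \<phi> \<Longrightarrow> A \<subseteq> B \<Longrightarrow> \<phi> A \<le> \<phi> B"
  unfolding submeasure_def by blast

lemma lsc_submeasure_submeasure: "lsc_submeasure \<phi> \<Longrightarrow> submeasure \<phi>"
  unfolding lsc_submeasure_def by simp

lemma lsc_submeasure_le_iff:
  assumes \<phi>: "lsc_submeasure \<phi>"
  shows "\<phi> A \<le> c \<longleftrightarrow> (\<forall>u. \<phi> (A \<inter> {..u}) \<le> c)"
proof
  assume le: "\<phi> A \<le> c"
  have "\<phi> (A \<inter> {..u}) \<le> \<phi> A" for u
    by (rule submeasure_mono[OF lsc_submeasure_submeasure[OF \<phi>]]) auto
  then show "\<forall>u. \<phi> (A \<inter> {..u}) \<le> c" using order_trans[OF _ le] by simp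
next
  assume bound: "\<forall>u. \<phi> (A \<inter> {..u}) \<le> c"
  have "(\<lambda>u. \<phi> (A \<inter> {..u})) \<longlonglongrightarrow> \<phi> A"
    using \<phi> unfolding lsc_submeasure_def by simp
  then show "\<phi> A \<le> c" by (rule LIMSEQ_le_const2) (use bound in simp)
qed

lemma kf_closed_lsc_submeasure_le:
  assumes \<phi>: "lsc_submeasure \<phi>" and S: "kf_lsc M S"
  shows "kf_closed M {Y \<in> RV M. \<phi> (S Y) \<le> c}"
proof -
  note sub = lsc_submeasure_submeasure[OF \<phi>]
  have "\<phi> A \<le> c" if "A \<subseteq> B" "\<phi> B \<le> c" for A B
    using order_trans[OF submeasure_mono[OF sub that(1)] that(2)] .
  then have "kf_closed M {Y \<in> RV M. \<phi> (S Y \<inter> {..u}) \<le> c}" for u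
    by (rule kf_closed_finite_trace[OF S finite_atMost])
  moreover have "{Y \<in> RV M. \<phi> (S Y) \<le> c} = (\<Inter>u. {Y \<in> RV M. \<phi> (S Y \<inter> {..u}) \<le> c})"
    using lsc_submeasure_le_iff[OF \<phi>, of "S _" c] by auto
  ultimately show ?thesis by (simp add: kf_closed_INT)
qed

lemma Exh_subset:
  assumes \<phi>: "submeasure \<phi>" and "A \<subseteq> B" "B \<in> Exh \<phi>"
  shows "A \<in> Exh \<phi>"
proof -
  have "(\<lambda>t. \<phi> (A - {..t})) \<longlonglongrightarrow> 0"
  proof (rule tendsto_sandwich[OF _ _ tendsto_const])
    show "\<forall>\<^sub>F t in sequentially. \<phi> (A - {..t}) \<le> \<phi> (B - {..t})"
      using \<open>A \<subseteq> B\<close> by (intro always_eventually allI submeasure_mono[OF \<phi>]) blast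
    show "(\<lambda>t. \<phi> (B - {..t})) \<longlonglongrightarrow> 0"
      using \<open>B \<in> Exh \<phi>\<close> unfolding Exh_def by simp
  qed simp
  then show ?thesis unfolding Exh_def by simp
qed

lemma Exh_iff_tail_le:
  assumes \<phi>: "submeasure \<phi>"
  shows "A \<in> Exh \<phi> \<longleftrightarrow> (\<forall>m. \<exists>t. \<phi> (A - {..t}) \<le> ennreal (inverse (real (Suc m))))"
proof
  assume "A \<in> Exh \<phi>"
  then have "(\<lambda>t. \<phi> (A - {..t})) \<longlonglongrightarrow> 0" unfolding Exh_def by simp
  show "\<forall>m. \<exists>t. \<phi> (A - {..t}) \<le> ennreal (inverse (real (Suc m)))"
  proof
    fix m
    have "0 < ennreal (inverse (real (Suc m)))" by simp
    from order_tendstoD(2)[OF \<open>_ \<longlonglongrightarrow> 0\<close> this]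
    obtain t where "\<phi> (A - {..t}) < ennreal (inverse (real (Suc m)))"
      by (auto simp: eventually_sequentially)
    then show "\<exists>t. \<phi> (A - {..t}) \<le> ennreal (inverse (real (Suc m)))"
      by (auto intro: less_imp_le)
  qed
next
  assume tail: "\<forall>m. \<exists>t. \<phi> (A - {..t}) \<le> ennreal (inverse (real (Suc m)))"
  have "(\<lambda>t. \<phi> (A - {..t})) \<longlonglongrightarrow> 0"
  proof (rule order_tendstoI)
    fix a :: ennreal assume "0 < a"
    have "(\<lambda>m. ennreal (inverse (real (Suc m)))) \<longlonglongrightarrow> 0"
      using tendsto_ennrealI[OF LIMSEQ_inverse_real_of_nat] by simp
    from order_tendstoD(2)[OF this \<open>0 < a\<close>] obtain m
      where m: "ennreal (inverse (real (Suc m))) < a"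
      by (auto simp: eventually_sequentially)
    from tail obtain t where t: "\<phi> (A - {..t}) \<le> ennreal (inverse (real (Suc m)))" by blast
    have "\<phi> (A - {..t'}) < a" if "t \<le> t'" for t'
    proof -
      have "\<phi> (A - {..t'}) \<le> \<phi> (A - {..t})"
        by (rule submeasure_mono[OF \<phi>]) (use that in auto)
      also note t
      also note m
      finally show ?thesis .
    qed
    then show "\<forall>\<^sub>F t in sequentially. \<phi> (A - {..t}) < a"
      by (auto simp: eventually_sequentially)
  qed simp
  then show "A \<in> Exh \<phi>" unfolding Exh_def by simp
qed

lemma (in finite_measure) ideal_prob_LIM_eq:
  fixes X :: "nat \<Rightarrow> 'a \<Rightarrow> 'u::{metric_space, second_countable_topology}"
  assumes X: "\<And>n. X n \<in> RV M" and hereditary: "\<And>A B. A \<subseteq> B \<Longrightarrow> B \<in> I \<Longrightarrow> A \<in> I"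
  shows "ideal_prob_LIM M I r X =
           {Y \<in> RV M. \<forall>k. exceed_set M X r (inverse (real (Suc k))) Y \<in> I}"
proof (intro equalityI subsetI)
  fix Y assume "Y \<in> ideal_prob_LIM M I r X"
  then show "Y \<in> {Y \<in> RV M. \<forall>k. exceed_set M X r (inverse (real (Suc k))) Y \<in> I}"
    unfolding ideal_prob_LIM_def exceed_set_def by simp
next
  fix Y assume "Y \<in> {Y \<in> RV M. \<forall>k. exceed_set M X r (inverse (real (Suc k))) Y \<in> I}"
  then have Y: "Y \<in> RV M" and A: "\<And>k. exceed_set M X r (inverse (real (Suc k))) Y \<in> I"
    by auto
  have "{n. measure M {s \<in> space M. dist (X n s) (Y s) > r + \<epsilon>} > \<delta>} \<in> I"
    if pos: "\<epsilon> > 0" "\<delta> > 0" for \<epsilon> \<delta>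
  proof -
    obtain k where "inverse (real (Suc k)) < min \<epsilon> \<delta>"
      using reals_Archimedean[of "min \<epsilon> \<delta>"] pos by auto
    then have k: "inverse (real (Suc k)) < \<epsilon>" "inverse (real (Suc k)) < \<delta>" by auto
    have "{n. measure M {s \<in> space M. dist (X n s) (Y s) > r + \<epsilon>} > \<delta>}
        \<subseteq> exceed_set M X r (inverse (real (Suc k))) Y"
    proof
      fix n assume "n \<in> {n. measure M {s \<in> space M. dist (X n s) (Y s) > r + \<epsilon>} > \<delta>}"
      then have "\<delta> < measure M {s \<in> space M. dist (X n s) (Y s) > r + \<epsilon>}" by simp
      also have "\<dots> \<le> measure M {s \<in> space M. dist (X n s) (Y s) > r + inverse (real (Suc k))}"
        by (rule finite_measure_mono) (use k RV_dist_gt_sets[OF X Y] in auto)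
      finally show "n \<in> exceed_set M X r (inverse (real (Suc k))) Y"
        using k(2) unfolding exceed_set_def by simp
    qed
    then show ?thesis using A by (rule hereditary)
  qed
  with Y show "Y \<in> ideal_prob_LIM M I r X" unfolding ideal_prob_LIM_def by blast
qed

lemma kf_F_sigma_delta_INT_UN:
  fixes G :: "nat \<Rightarrow> nat \<Rightarrow> nat \<Rightarrow> ('s \<Rightarrow> 'u::metric_space) set"
  assumes "\<And>k m t. kf_closed M (G k m t)"
  shows "kf_F_sigma_delta M (\<Inter>k. \<Inter>m. \<Union>t. G k m t)"
  unfolding kf_F_sigma_delta_def
proof (intro exI conjI allI)
  define F where "F i = G (fst (prod_decode i)) (snd (prod_decode i))" for i
  show "kf_closed M (F i j)" for i j unfolding F_def by (rule assms)
  show "(\<Inter>k. \<Inter>m. \<Union>t. G k m t) = (\<Inter>i. \<Union>j. F i j)"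
  proof (intro equalityI subsetI INT_I)
    fix Y i assume Y: "Y \<in> (\<Inter>k. \<Inter>m. \<Union>t. G k m t)"
    obtain k m where "prod_decode i = (k, m)" by fastforce
    moreover from Y obtain t where "Y \<in> G k m t" by blast
    ultimately show "Y \<in> (\<Union>j. F i j)" unfolding F_def by auto
  next
    fix Y k m assume "Y \<in> (\<Inter>i. \<Union>j. F i j)"
    then have "Y \<in> (\<Union>j. F (prod_encode (k, m)) j)" by blast
    then show "Y \<in> (\<Union>t. G k m t)" unfolding F_def by simp
  qed
qed

theorem theorem2p5:
  fixes M :: "'s measure"
    and X :: "nat \<Rightarrow> 's \<Rightarrow> 'u::{metric_space, second_countable_topology}"
    and r :: real
    and I :: "nat set set"
  assumes "prob_space M"
    and "\<forall>n. X n \<in> RV M"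
    and "r \<ge> 0"
    and "analytic_P_ideal I"
  shows "kf_F_sigma_delta M (ideal_prob_LIM M I r X)"
proof -
  interpret prob_space M by fact
  have X: "\<And>n. X n \<in> RV M" using assms(2) by blast
  obtain \<phi> where \<phi>: "lsc_submeasure \<phi>" and I: "I = Exh \<phi>"
    using assms(4) unfolding analytic_P_ideal_def by blast
  note sub = lsc_submeasure_submeasure[OF \<phi>]
  let ?A = "\<lambda>k. exceed_set M X r (inverse (real (Suc k)))"
  let ?G = "\<lambda>k m t. {Y \<in> RV M. \<phi> (?A k Y - {..t}) \<le> ennreal (inverse (real (Suc m)))}"
  have "ideal_prob_LIM M I r X = {Y \<in> RV M. \<forall>k. ?A k Y \<in> Exh \<phi>}"
    unfolding I by (rule ideal_prob_LIM_eq[OF X Exh_subset[OF sub]])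
  also have "\<dots> = (\<Inter>k. \<Inter>m. \<Union>t. ?G k m t)"
    unfolding Exh_iff_tail_le[OF sub] by blast
  finally show ?thesis
    by (simp only: kf_F_sigma_delta_INT_UN
        kf_closed_lsc_submeasure_le[OF \<phi> kf_lsc_Diff[OF kf_lsc_exceed_set[OF X]]])
qed

end
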